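(* Consider a quadrotor with unknown mass $m>0$, and the position and attitude tracking errors $e_p(t)\in\mathbb{R}^3$, $e_q(t)\in\mathbb{R}^3$, with $\xi_p=[e_p^T\ \dot e_p^T]^T$, $\xi_q=[e_q^T\ \dot e_q^T]^T$ and sliding variables $$s_p=\dot e_p+\Phi_p e_p,\qquad s_q=\dot e_q+\Phi_q e_q,$$ where $\Phi_p,\Phi_q$ are positive definite gain matrices. Suppose the sliding variables obey $$m\dot s_p=\tau_p+\varphi_p-m g_p,\qquad J(t)\dot s_q=\tau_q-C_q(t)s_q+\varphi_q,$$ where $g_p=[0\ 0\ g]^T$ ($g>0$ the gravitational acceleration), $J(t)\in\mathbb{R}^{3\times 3}$ is a continuously differentiable symmetric matrix with $\underline{j}I\le J(t)\le \overline{j}I$ for some unknown $0<\underline j\le\overline j$, $C_q(t)\in\mathbb{R}^{3\times3}$ satisfies $r^T(\dot J-2C_q)r=0$ for all $r\in\mathbb{R}^3$, and the (unknown) lumped uncertainties satisfy, for all $t$, $$\|\varphi_p\|\le K_{p0}^*+K_{p1}^*\|\xi_p\|,\qquad \|\varphi_q\|\le K_{q0}^*+K_{q1}^*\|\xi_q\|+K_{q2}^*\|\xi_q\|^2$$ for unknown finite constants $K_{pi}^*,K_{qi}^*\ge 0$. Apply the control laws $$\tau_p=-\Lambda_p s_p-\rho_p\,\mathrm{sgn}(s_p)+\hat m\,g_p,\qquad \rho_p=\hat K_{p0}+\hat K_{p1}\|\xi_p\|,$$ $$\tau_q=-\Lambda_q s_q-\rho_q\,\mathrm{sgn}(s_q),\qquad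 \rho_q=\hat K_{q0}+\hat K_{q1}\|\xi_q\|+\hat K_{q2}\|\xi_q\|^2,$$ with positive definite $\Lambda_p,\Lambda_q$, $\mathrm{sgn}(x)=x/\|x\|$, and the adaptive laws $$\dot{\hat K}_{pi}=\|s_p\|\|\xi_p\|^i-\alpha_{pi}\hat K_{pi},\ \hat K_{pi}(0)>0\ (i=0,1),\qquad \dot{\hat m}=-s_p^Tg_p-\alpha_m\hat m,\ \hat m(0)>0,$$ $$\dot{\hat K}_{qi}=\|s_q\|\|\xi_q\|^i-\alpha_{qi}\hat K_{qi},\ \hat K_{qi}(0)>0\ (i=0,1,2),$$ with design scalars $\alpha_{pi},\alpha_m,\alpha_{qi}>0$. Then the closed-loop trajectories are uniformly ultimately bounded: defining $$V=\tfrac12 s_p^Tms_p+\tfrac12\sum_{i=0}^{1}(\hat K_{pi}-K_{pi}^* )^2+\tfrac12(\hat m-m)^2+\tfrac12 s_q^TJs_q+\tfrac12\sum_{i=0}^{2}(\hat K_{qi}-K_{qi}^* )^2,$$ there exists a constant $\bar{\mathcal B}\ge0$, depending only on $m,\overline j$, the constants $K_{pi}^*,K_{qi}^*$ and the design parameters $\Lambda_p,\Lambda_q,\alpha_{pi},\alpha_m,\alpha_{qi}$, such that $V(t)\le\max\{V(0),\bar{\mathcal B}\}$ for all $t\ge0$.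
   Context: This abstracts the outer (position) and inner (attitude) loops of a quadrotor controller: $p=[x\ y\ z]^T$ and $q=[\phi\ \theta\ \psi]^T$ are position and roll/pitch/yaw; $e_p=p-p_d$ for a bounded smooth desired trajectory $p_d$; $e_q$ is the attitude error (obtained from the vee map of $R_d^TR-R^TR_d$), $J$ the inertia matrix and $C_q$ the Coriolis matrix of the attitude dynamics, $\varphi_p,\varphi_q$ lump disturbances and unknown dynamics. $\lambda_{\min}(\cdot)$ denotes minimum eigenvalue. Uniformly ultimately bounded means: there exist $b>0$, $c>0$ such that for every $0<a<c$ there is $T>0$ with $\|x(t_0)\|\le a\Rightarrow\|x(t)\|\le b$ for all $t\ge t_0+T$. *)

theory Defs
  imports "HOL-Analysis.Analysis"
begin

definition posdef :: "real^3^3 \<Rightarrow> bool" where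
  "posdef A \<longleftrightarrow> transpose A = A \<and> (\<forall>x. x \<noteq> 0 \<longrightarrow> 0 < x \<bullet> (A *v x))"

definition gvec :: "real \<Rightarrow> real^3" where
  "gvec g = vector [0, 0, g]"

definition slide :: "real^3^3 \<Rightarrow> (real \<Rightarrow> real^3) \<Rightarrow> (real \<Rightarrow> real^3) \<Rightarrow> real \<Rightarrow> real^3" where
  "slide Phi e de t = de t + Phi *v e t"

text \<open>Norm of the stacked state xi = [e^T de^T]^T (product norm = Euclidean norm on R^6).\<close>
definition xinorm :: "(real \<Rightarrow> real^3) \<Rightarrow> (real \<Rightarrow> real^3) \<Rightarrow> real \<Rightarrow> real" where
  "xinorm e de t = norm (e t, de t)"

text \<open>Position control law; sgn x = x / norm x (library sgn on vectors).\<close>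
definition tau_p :: "real^3^3 \<Rightarrow> real^3^3 \<Rightarrow> real \<Rightarrow> (real \<Rightarrow> real^3) \<Rightarrow> (real \<Rightarrow> real^3)
    \<Rightarrow> (nat \<Rightarrow> real \<Rightarrow> real) \<Rightarrow> (real \<Rightarrow> real) \<Rightarrow> real \<Rightarrow> real^3" where
  "tau_p Lp Phip g ep dep Kp mh t =
     (let s = slide Phip ep dep t; x = xinorm ep dep t; rho = Kp 0 t + Kp 1 t * x
      in - (Lp *v s) - rho *\<^sub>R sgn s + mh t *\<^sub>R gvec g)"

definition tau_q :: "real^3^3 \<Rightarrow> real^3^3 \<Rightarrow> (real \<Rightarrow> real^3) \<Rightarrow> (real \<Rightarrow> real^3)
    \<Rightarrow> (nat \<Rightarrow> real \<Rightarrow> real) \<Rightarrow> real \<Rightarrow> real^3" where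
  "tau_q Lq Phiq eq deq Kq t =
     (let s = slide Phiq eq deq t; x = xinorm eq deq t;
          rho = Kq 0 t + Kq 1 t * x + Kq 2 t * x\<^sup>2
      in - (Lq *v s) - rho *\<^sub>R sgn s)"

definition closed_loop ::
  "real \<Rightarrow> real \<Rightarrow> (nat \<Rightarrow> real) \<Rightarrow> (nat \<Rightarrow> real) \<Rightarrow> real^3^3 \<Rightarrow> real^3^3
   \<Rightarrow> (nat \<Rightarrow> real) \<Rightarrow> real \<Rightarrow> (nat \<Rightarrow> real)
   \<Rightarrow> real \<Rightarrow> real \<Rightarrow> real^3^3 \<Rightarrow> real^3^3
   \<Rightarrow> (real \<Rightarrow> real^3^3) \<Rightarrow> (real \<Rightarrow> real^3^3) \<Rightarrow> (real \<Rightarrow> real^3^3)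
   \<Rightarrow> (real \<Rightarrow> real^3) \<Rightarrow> (real \<Rightarrow> real^3) \<Rightarrow> (real \<Rightarrow> real^3) \<Rightarrow> (real \<Rightarrow> real^3)
   \<Rightarrow> (real \<Rightarrow> real^3) \<Rightarrow> (real \<Rightarrow> real^3)
   \<Rightarrow> (real \<Rightarrow> real^3) \<Rightarrow> (real \<Rightarrow> real^3)
   \<Rightarrow> (real \<Rightarrow> real) \<Rightarrow> (nat \<Rightarrow> real \<Rightarrow> real) \<Rightarrow> (nat \<Rightarrow> real \<Rightarrow> real) \<Rightarrow> bool" where
  "closed_loop m ju Kps Kqs Lp Lq ap am aq g jl Phip Phiq J dJ Cq ep dep eq deq dsp dsq
      phip phiq mh Kp Kq \<longleftrightarrow>
    0 < g \<and> 0 < jl \<and> jl \<le> ju \<and> posdef Phip \<and> posdef Phiq \<and>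
    (\<forall>t\<ge>0. (ep has_vector_derivative dep t) (at t within {0..})) \<and>
    (\<forall>t\<ge>0. (eq has_vector_derivative deq t) (at t within {0..})) \<and>
    (\<forall>t\<ge>0. (J has_vector_derivative dJ t) (at t within {0..})) \<and>
    continuous_on {0..} dJ \<and>
    (\<forall>t\<ge>0. transpose (J t) = J t \<and>
       (\<forall>r. jl * (r \<bullet> r) \<le> r \<bullet> (J t *v r) \<and> r \<bullet> (J t *v r) \<le> ju * (r \<bullet> r))) \<and>
    (\<forall>t\<ge>0. \<forall>r. r \<bullet> ((dJ t - 2 *\<^sub>R Cq t) *v r) = 0) \<and>
    (\<forall>t\<ge>0. norm (phip t) \<le> Kps 0 + Kps 1 * xinorm ep dep t) \<and>
    (\<forall>t\<ge>0. norm (phiq t) \<le> Kqs 0 + Kqs 1 * xinorm eq deq t + Kqs 2 * (xinorm eq deq t)\<^sup>2) \<and>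
    (\<forall>t\<ge>0. (slide Phip ep dep has_vector_derivative dsp t) (at t within {0..}) \<and>
       m *\<^sub>R dsp t = tau_p Lp Phip g ep dep Kp mh t + phip t - m *\<^sub>R gvec g) \<and>
    (\<forall>t\<ge>0. (slide Phiq eq deq has_vector_derivative dsq t) (at t within {0..}) \<and>
       J t *v dsq t = tau_q Lq Phiq eq deq Kq t - Cq t *v slide Phiq eq deq t + phiq t) \<and>
    (\<forall>i<2. \<forall>t\<ge>0. (Kp i has_real_derivative
        (norm (slide Phip ep dep t) * xinorm ep dep t ^ i - ap i * Kp i t)) (at t within {0..})) \<and>
    (\<forall>i<2. 0 < Kp i 0) \<and>
    (\<forall>t\<ge>0. (mh has_real_derivative
        (- (slide Phip ep dep t \<bullet> gvec g) - am * mh t)) (at t within {0..})) \<and>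
    0 < mh 0 \<and>
    (\<forall>i<3. \<forall>t\<ge>0. (Kq i has_real_derivative
        (norm (slide Phiq eq deq t) * xinorm eq deq t ^ i - aq i * Kq i t)) (at t within {0..})) \<and>
    (\<forall>i<3. 0 < Kq i 0)"

definition Vfun ::
  "real \<Rightarrow> (nat \<Rightarrow> real) \<Rightarrow> (nat \<Rightarrow> real) \<Rightarrow> real^3^3 \<Rightarrow> real^3^3 \<Rightarrow> (real \<Rightarrow> real^3^3)
   \<Rightarrow> (real \<Rightarrow> real^3) \<Rightarrow> (real \<Rightarrow> real^3) \<Rightarrow> (real \<Rightarrow> real^3) \<Rightarrow> (real \<Rightarrow> real^3)
   \<Rightarrow> (real \<Rightarrow> real) \<Rightarrow> (nat \<Rightarrow> real \<Rightarrow> real) \<Rightarrow> (nat \<Rightarrow> real \<Rightarrow> real) \<Rightarrow> real \<Rightarrow> real" where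
  "Vfun m Kps Kqs Phip Phiq J ep dep eq deq mh Kp Kq t =
     (let sp = slide Phip ep dep t; sq = slide Phiq eq deq t in
       1/2 * (sp \<bullet> (m *\<^sub>R sp)) + 1/2 * (\<Sum>i<2. (Kp i t - Kps i)\<^sup>2) + 1/2 * (mh t - m)\<^sup>2
       + 1/2 * (sq \<bullet> (J t *v sq)) + 1/2 * (\<Sum>i<3. (Kq i t - Kqs i)\<^sup>2))"

end

theory Submission
  imports Defs
begin

(* Along the closed loop the adaptive
   gains absorb the unknown disturbance bounds K' up to the leakage terms -alpha K (K - K'),
   the estimate of m absorbs the gravity mismatch, and dJ - 2 C_q drops out by skew symmetry.
   Completing squares in the leakage terms gives V' <= -k V + C, where k is the smallest of
   2 lambda_min(Lambda_p)/m, 2 lambda_min(Lambda_q)/ju and the alphas, and C collects the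
   terms alpha K'^2/2 and alpha_m m^2/2.  Comparison with the linear ODE then bounds V by
   max (V 0) (C/k). *)

lemma bounded_bilinear_matrix_vector_mult:
  "bounded_bilinear ((*v) :: real^'n^'m \<Rightarrow> real^'n \<Rightarrow> real^'m)"
  unfolding bilinear_conv_bounded_bilinear[symmetric] bilinear_def linear_iff
  by (simp add: matrix_vector_mult_add_rdistrib matrix_vector_right_distrib
      matrix_vector_mult_scaleR scaleR_matrix_vector_assoc)

lemma inner_symmetric_matrix_swap:
  fixes A :: "real^'n^'n"
  assumes "transpose A = A"
  shows "y \<bullet> (A *v x) = x \<bullet> (A *v y)"
  by (metis assms dot_lmul_matrix inner_commute vector_transpose_matrix)

lemma quadratic_form_coercive:
  fixes A :: "real^'n^'n"
  assumes pos: "\<And>x. x \<noteq> 0 \<Longrightarrow> 0 < x \<bullet> (A *v x)"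
  obtains l where "0 < l" "\<And>x. l * (x \<bullet> x) \<le> x \<bullet> (A *v x)"
proof -
  let ?S = "sphere (0::real^'n) 1"
  have "continuous_on ?S (\<lambda>x. x \<bullet> (A *v x))"
    by (intro continuous_intros linear_continuous_on bounded_linear.linear) simp
  moreover have "?S \<noteq> {}"
    by (simp add: sphere_eq_empty)
  ultimately obtain u where u: "u \<in> ?S" "\<And>y. y \<in> ?S \<Longrightarrow> u \<bullet> (A *v u) \<le> y \<bullet> (A *v y)"
    using continuous_attains_inf[OF compact_sphere] by blast
  have "0 < u \<bullet> (A *v u)"
    by (rule pos) (use u(1) in auto)
  moreover have "u \<bullet> (A *v u) * (x \<bullet> x) \<le> x \<bullet> (A *v x)" for x
  proof (cases "x = 0")
    case False
    let ?y = "(1 / norm x) *\<^sub>R x"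
    have "u \<bullet> (A *v u) \<le> ?y \<bullet> (A *v ?y)"
      using False by (intro u(2)) simp
    also have "\<dots> = (x \<bullet> (A *v x)) / (x \<bullet> x)"
      by (simp add: matrix_vector_mult_scaleR power2_norm_eq_inner[symmetric] power2_eq_square)
    finally show ?thesis
      using False by (simp add: pos_le_divide_eq)
  qed simp
  ultimately show ?thesis using that by blast
qed

lemma has_real_derivative_quadratic_form:
  fixes s :: "real \<Rightarrow> real^'n" and A :: "real \<Rightarrow> real^'n^'n"
  assumes "(s has_vector_derivative s') (at t within T)"
    and "(A has_vector_derivative A') (at t within T)"
  shows "((\<lambda>t. s t \<bullet> (A t *v s t)) has_real_derivative
     s t \<bullet> (A t *v s') + s t \<bullet> (A' *v s t) + s' \<bullet> (A t *v s t)) (at t within T)"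
proof -
  have "((\<lambda>t. A t *v s t) has_vector_derivative A t *v s' + A' *v s t) (at t within T)"
    using bounded_bilinear.has_vector_derivative[OF bounded_bilinear_matrix_vector_mult assms(2,1)]
    by simp
  from bounded_bilinear.has_vector_derivative[OF bounded_bilinear_inner assms(1) this]
  show ?thesis
    by (simp add: has_real_derivative_iff_has_vector_derivative inner_add_right)
qed

lemma has_real_derivative_sum_squares:
  assumes "\<forall>i\<in>I. (K i has_real_derivative dK i) (at t within T)"
  shows "((\<lambda>t. 1/2 * (\<Sum>i\<in>I. (K i t - c i)\<^sup>2)) has_real_derivative
     (\<Sum>i\<in>I. (K i t - c i) * dK i)) (at t within T)"
  using assms by (auto intro!: derivative_eq_intros simp: sum_distrib_left mult.commute)

lemma decay_comparison:
  fixes V :: "real \<Rightarrow> real" and k C t :: real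
  assumes "0 < k"
    and decay: "\<And>s. 0 \<le> s \<Longrightarrow>
      \<exists>D. (V has_real_derivative D) (at s within {0..}) \<and> D \<le> - k * V s + C"
    and "0 \<le> t"
  shows "V t \<le> max (V 0) (C / k)"
proof -
  define W where "W s = exp (k * s) * (V s - C / k)" for s
  have W_decay: "\<exists>D. (W has_real_derivative D) (at s within {0..}) \<and> D \<le> 0" if s: "0 \<le> s" for s
  proof -
    obtain D where D: "(V has_real_derivative D) (at s within {0..})" "D \<le> - k * V s + C"
      using decay[OF s] by blast
    have "(W has_real_derivative exp (k * s) * (D + k * V s - C)) (at s within {0..})"
      unfolding W_def using D(1) \<open>0 < k\<close>
      by (auto intro!: derivative_eq_intros simp: algebra_simps)
    moreover have "exp (k * s) * (D + k * V s - C) \<le> 0"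
      using D(2) by (simp add: mult_nonneg_nonpos)
    ultimately show ?thesis by blast
  qed
  have "continuous_on {0..} W"
    unfolding continuous_on_eq_continuous_within
    using W_decay DERIV_continuous by blast
  have "W t \<le> W 0"
  proof (rule DERIV_nonpos_imp_decreasing_open[OF \<open>0 \<le> t\<close>])
    fix x :: real assume "0 < x" "x < t"
    then have "at x within {0..} = at x"
      by (intro at_within_interior) simp
    then show "\<exists>y. (W has_real_derivative y) (at x) \<and> y \<le> 0"
      using W_decay[of x] \<open>0 < x\<close> by simp
  qed (use \<open>continuous_on {0..} W\<close> in \<open>auto intro: continuous_on_subset\<close>)
  then have "V t - C / k \<le> exp (- (k * t)) * (V 0 - C / k)"
    by (simp add: W_def exp_minus field_simps)
  moreover have "exp (- (k * t)) \<le> 1"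
    using \<open>0 < k\<close> \<open>0 \<le> t\<close> by simp
  moreover have "exp (- (k * t)) * (V 0 - C / k) \<le> max 0 (V 0 - C / k)"
  proof (cases "V 0 \<le> C / k")
    case True
    then show ?thesis by (simp add: mult_nonneg_nonpos)
  next
    case False
    then show ?thesis using \<open>exp (- (k * t)) \<le> 1\<close> by (simp add: mult_left_le_one_le)
  qed
  ultimately show ?thesis by linarith
qed

lemma inner_sgn_self: "x \<bullet> sgn x = norm (x::'a::real_inner)"
  by (cases "x = 0") (simp_all add: sgn_div_norm dot_square_norm power2_eq_square)

lemma leakage_bound:
  fixes a k K Ks :: real
  assumes "0 < k" "k \<le> a"
  shows "- a * (K - Ks) * K \<le> a / 2 * Ks\<^sup>2 - k / 2 * (K - Ks)\<^sup>2"
proof -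
  have "- a * (K - Ks) * K = a / 2 * Ks\<^sup>2 - a / 2 * (K - Ks)\<^sup>2 - a / 2 * K\<^sup>2"
    by (simp add: power2_eq_square algebra_simps)
  moreover have "k / 2 * (K - Ks)\<^sup>2 \<le> a / 2 * (K - Ks)\<^sup>2"
    using assms by (intro mult_right_mono) auto
  moreover have "0 \<le> a / 2 * K\<^sup>2"
    using assms by simp
  ultimately show ?thesis by linarith
qed

lemma adaptive_robust_bound:
  fixes s \<phi> :: "'a::real_inner"
  assumes \<phi>: "norm \<phi> \<le> (\<Sum>i<n. Ks i * x ^ i)"
    and "0 < k" and a: "\<forall>i<n. k \<le> a i"
  shows "s \<bullet> \<phi> - norm s * (\<Sum>i<n. K i * x ^ i)
      + (\<Sum>i<n. (K i - Ks i) * (norm s * x ^ i - a i * K i))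
    \<le> (\<Sum>i<n. a i / 2 * (Ks i)\<^sup>2) - k / 2 * (\<Sum>i<n. (K i - Ks i)\<^sup>2)"
proof -
  have "- norm s * (\<Sum>i<n. K i * x ^ i) + (\<Sum>i<n. (K i - Ks i) * (norm s * x ^ i - a i * K i))
      = - norm s * (\<Sum>i<n. Ks i * x ^ i) + (\<Sum>i<n. - a i * (K i - Ks i) * K i)"
  proof -
    have "- norm s * (K i * x ^ i) + (K i - Ks i) * (norm s * x ^ i - a i * K i)
        = - norm s * (Ks i * x ^ i) + - a i * (K i - Ks i) * K i" for i
      by (simp add: algebra_simps)
    then show ?thesis
      by (simp add: sum_distrib_left sum.distrib[symmetric])
  qed
  moreover have "s \<bullet> \<phi> \<le> norm s * (\<Sum>i<n. Ks i * x ^ i)"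
    using norm_cauchy_schwarz[of s \<phi>] mult_left_mono[OF \<phi> norm_ge_zero[of s]] by linarith
  moreover have "(\<Sum>i<n. - a i * (K i - Ks i) * K i) \<le> (\<Sum>i<n. a i / 2 * (Ks i)\<^sup>2 - k / 2 * (K i - Ks i)\<^sup>2)"
    using a by (intro sum_mono leakage_bound[OF \<open>0 < k\<close>]) auto
  moreover have "(\<Sum>i<n. a i / 2 * (Ks i)\<^sup>2 - k / 2 * (K i - Ks i)\<^sup>2)
      = (\<Sum>i<n. a i / 2 * (Ks i)\<^sup>2) - k / 2 * (\<Sum>i<n. (K i - Ks i)\<^sup>2)"
    by (simp add: sum_subtractf sum_distrib_left)
  ultimately show ?thesis by linarith
qed

lemma position_dissipation:
  fixes s ds \<phi> gv :: "real^'n" and L :: "real^'n^'n"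
  assumes dyn: "m *\<^sub>R ds = - (L *v s) - (\<Sum>i<n. K i * x ^ i) *\<^sub>R sgn s + mh *\<^sub>R gv + \<phi> - m *\<^sub>R gv"
    and \<phi>: "norm \<phi> \<le> (\<Sum>i<n. Ks i * x ^ i)"
    and L: "l * (s \<bullet> s) \<le> s \<bullet> (L *v s)" and "k * m \<le> 2 * l"
    and "0 < k" and a: "\<forall>i<n. k \<le> a i" and "k \<le> am"
  shows "s \<bullet> (m *\<^sub>R ds) + (\<Sum>i<n. (K i - Ks i) * (norm s * x ^ i - a i * K i))
      + (mh - m) * (- (s \<bullet> gv) - am * mh)
    \<le> - k * (1/2 * (s \<bullet> (m *\<^sub>R s)) + 1/2 * (\<Sum>i<n. (K i - Ks i)\<^sup>2) + 1/2 * (mh - m)\<^sup>2)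
      + ((\<Sum>i<n. a i / 2 * (Ks i)\<^sup>2) + am / 2 * m\<^sup>2)"
proof -
  have "s \<bullet> (m *\<^sub>R ds) + (\<Sum>i<n. (K i - Ks i) * (norm s * x ^ i - a i * K i))
      + (mh - m) * (- (s \<bullet> gv) - am * mh)
    = - (s \<bullet> (L *v s))
      + (s \<bullet> \<phi> - norm s * (\<Sum>i<n. K i * x ^ i) + (\<Sum>i<n. (K i - Ks i) * (norm s * x ^ i - a i * K i)))
      + - am * (mh - m) * mh"
    unfolding dyn by (simp add: inner_diff_right inner_add_right inner_sgn_self algebra_simps)
  moreover have "k * (s \<bullet> (m *\<^sub>R s)) \<le> 2 * (s \<bullet> (L *v s))"
    using L mult_right_mono[OF \<open>k * m \<le> 2 * l\<close>, of "s \<bullet> s"] by simp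
  moreover have "s \<bullet> \<phi> - norm s * (\<Sum>i<n. K i * x ^ i)
      + (\<Sum>i<n. (K i - Ks i) * (norm s * x ^ i - a i * K i))
    \<le> (\<Sum>i<n. a i / 2 * (Ks i)\<^sup>2) - k / 2 * (\<Sum>i<n. (K i - Ks i)\<^sup>2)"
    using \<phi> \<open>0 < k\<close> a by (rule adaptive_robust_bound)
  moreover have "- am * (mh - m) * mh \<le> am / 2 * m\<^sup>2 - k / 2 * (mh - m)\<^sup>2"
    using \<open>0 < k\<close> \<open>k \<le> am\<close> by (rule leakage_bound)
  ultimately show ?thesis by (simp add: distrib_left)
qed

lemma attitude_dissipation:
  fixes s ds \<phi> :: "real^'n" and J dJ C L :: "real^'n^'n"
  assumes dyn: "J *v ds = - (L *v s) - (\<Sum>i<n. K i * x ^ i) *\<^sub>R sgn s - C *v s + \<phi>"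
    and skew: "s \<bullet> ((dJ - 2 *\<^sub>R C) *v s) = 0"
    and \<phi>: "norm \<phi> \<le> (\<Sum>i<n. Ks i * x ^ i)"
    and L: "l * (s \<bullet> s) \<le> s \<bullet> (L *v s)" and J: "s \<bullet> (J *v s) \<le> j * (s \<bullet> s)"
    and "k * j \<le> 2 * l" and "0 < k" and a: "\<forall>i<n. k \<le> a i"
  shows "s \<bullet> (J *v ds) + 1/2 * (s \<bullet> (dJ *v s))
      + (\<Sum>i<n. (K i - Ks i) * (norm s * x ^ i - a i * K i))
    \<le> - k * (1/2 * (s \<bullet> (J *v s)) + 1/2 * (\<Sum>i<n. (K i - Ks i)\<^sup>2)) + (\<Sum>i<n. a i / 2 * (Ks i)\<^sup>2)"
proof -
  have "s \<bullet> (dJ *v s) = 2 * (s \<bullet> (C *v s))"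
    using skew by (simp add: matrix_vector_mult_diff_rdistrib inner_diff_right
        scaleR_matrix_vector_assoc[symmetric])
  then have "s \<bullet> (J *v ds) + 1/2 * (s \<bullet> (dJ *v s))
      + (\<Sum>i<n. (K i - Ks i) * (norm s * x ^ i - a i * K i))
    = - (s \<bullet> (L *v s))
      + (s \<bullet> \<phi> - norm s * (\<Sum>i<n. K i * x ^ i) + (\<Sum>i<n. (K i - Ks i) * (norm s * x ^ i - a i * K i)))"
    unfolding dyn by (simp add: inner_diff_right inner_add_right inner_sgn_self)
  moreover have "k * (s \<bullet> (J *v s)) \<le> 2 * (s \<bullet> (L *v s))"
  proof -
    have "k * (s \<bullet> (J *v s)) \<le> k * j * (s \<bullet> s)"
      using mult_left_mono[OF J] \<open>0 < k\<close> by (simp add: mult.assoc)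
    also have "\<dots> \<le> 2 * l * (s \<bullet> s)"
      using \<open>k * j \<le> 2 * l\<close> by (rule mult_right_mono) simp
    also have "\<dots> \<le> 2 * (s \<bullet> (L *v s))"
      using L by simp
    finally show ?thesis .
  qed
  moreover have "s \<bullet> \<phi> - norm s * (\<Sum>i<n. K i * x ^ i)
      + (\<Sum>i<n. (K i - Ks i) * (norm s * x ^ i - a i * K i))
    \<le> (\<Sum>i<n. a i / 2 * (Ks i)\<^sup>2) - k / 2 * (\<Sum>i<n. (K i - Ks i)\<^sup>2)"
    using \<phi> \<open>0 < k\<close> a by (rule adaptive_robust_bound)
  ultimately show ?thesis by (simp add: distrib_left)
qed

definition position_energy ::
  "real \<Rightarrow> (nat \<Rightarrow> real) \<Rightarrow> (real \<Rightarrow> real^3) \<Rightarrow> (real \<Rightarrow> real) \<Rightarrow> (nat \<Rightarrow> real \<Rightarrow> real) \<Rightarrow> real \<Rightarrow> real"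
where
  "position_energy m Kps s mh Kp t =
     1/2 * (s t \<bullet> (m *\<^sub>R s t)) + 1/2 * (\<Sum>i<2. (Kp i t - Kps i)\<^sup>2) + 1/2 * (mh t - m)\<^sup>2"

definition attitude_energy ::
  "(nat \<Rightarrow> real) \<Rightarrow> (real \<Rightarrow> real^3^3) \<Rightarrow> (real \<Rightarrow> real^3) \<Rightarrow> (nat \<Rightarrow> real \<Rightarrow> real) \<Rightarrow> real \<Rightarrow> real"
where
  "attitude_energy Kqs J s Kq t = 1/2 * (s t \<bullet> (J t *v s t)) + 1/2 * (\<Sum>i<3. (Kq i t - Kqs i)\<^sup>2)"

lemma Vfun_eq_energies:
  "Vfun m Kps Kqs Phip Phiq J ep dep eq deq mh Kp Kq =
     (\<lambda>t. position_energy m Kps (slide Phip ep dep) mh Kp t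
        + attitude_energy Kqs J (slide Phiq eq deq) Kq t)"
  by (simp add: fun_eq_iff Vfun_def position_energy_def attitude_energy_def Let_def)

lemma has_real_derivative_position_energy:
  fixes s :: "real \<Rightarrow> real^3"
  assumes "(s has_vector_derivative ds) (at t within T)"
    and "\<forall>i<2. (Kp i has_real_derivative dK i) (at t within T)"
    and "(mh has_real_derivative dmh) (at t within T)"
  shows "(position_energy m Kps s mh Kp has_real_derivative
     s t \<bullet> (m *\<^sub>R ds) + (\<Sum>i<2. (Kp i t - Kps i) * dK i) + (mh t - m) * dmh) (at t within T)"
proof -
  have "((\<lambda>t. m *\<^sub>R s t) has_vector_derivative m *\<^sub>R ds) (at t within T)"
    using assms(1) by (rule bounded_linear.has_vector_derivative[OF bounded_linear_scaleR_right])
  from bounded_bilinear.has_vector_derivative[OF bounded_bilinear_inner assms(1) this]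
  have "((\<lambda>t. s t \<bullet> (m *\<^sub>R s t)) has_real_derivative 2 * (s t \<bullet> (m *\<^sub>R ds))) (at t within T)"
    by (simp add: has_real_derivative_iff_has_vector_derivative inner_commute)
  moreover have "((\<lambda>t. 1/2 * (mh t - m)\<^sup>2) has_real_derivative (mh t - m) * dmh) (at t within T)"
    using assms(3) by (auto intro!: derivative_eq_intros)
  ultimately have "((\<lambda>t. 1/2 * (s t \<bullet> (m *\<^sub>R s t)) + 1/2 * (\<Sum>i<2. (Kp i t - Kps i)\<^sup>2)
      + 1/2 * (mh t - m)\<^sup>2) has_real_derivative
      1/2 * (2 * (s t \<bullet> (m *\<^sub>R ds))) + (\<Sum>i<2. (Kp i t - Kps i) * dK i) + (mh t - m) * dmh)
      (at t within T)"
    using assms(2) by (intro DERIV_add DERIV_cmult has_real_derivative_sum_squares) auto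
  then show ?thesis
    by (simp add: position_energy_def[abs_def])
qed

lemma has_real_derivative_attitude_energy:
  fixes s :: "real \<Rightarrow> real^3" and J :: "real \<Rightarrow> real^3^3"
  assumes "(s has_vector_derivative ds) (at t within T)"
    and "(J has_vector_derivative dJ) (at t within T)" and "transpose (J t) = J t"
    and "\<forall>i<3. (Kq i has_real_derivative dK i) (at t within T)"
  shows "(attitude_energy Kqs J s Kq has_real_derivative
     s t \<bullet> (J t *v ds) + 1/2 * (s t \<bullet> (dJ *v s t)) + (\<Sum>i<3. (Kq i t - Kqs i) * dK i)) (at t within T)"
proof -
  have "ds \<bullet> (J t *v s t) = s t \<bullet> (J t *v ds)"
    using assms(3) by (rule inner_symmetric_matrix_swap)
  with has_real_derivative_quadratic_form[OF assms(1,2)]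
  have "((\<lambda>t. s t \<bullet> (J t *v s t)) has_real_derivative
      2 * (s t \<bullet> (J t *v ds)) + s t \<bullet> (dJ *v s t)) (at t within T)"
    by simp
  then have "((\<lambda>t. 1/2 * (s t \<bullet> (J t *v s t)) + 1/2 * (\<Sum>i<3. (Kq i t - Kqs i)\<^sup>2))
      has_real_derivative 1/2 * (2 * (s t \<bullet> (J t *v ds)) + s t \<bullet> (dJ *v s t))
        + (\<Sum>i<3. (Kq i t - Kqs i) * dK i)) (at t within T)"
    using assms(4) by (intro DERIV_add DERIV_cmult has_real_derivative_sum_squares) auto
  then show ?thesis
    by (simp add: attitude_energy_def[abs_def] algebra_simps)
qed

lemma closed_loop_position_energy_decay:
  assumes cl: "closed_loop m ju Kps Kqs Lp Lq ap am aq g jl Phip Phiq J dJ Cq ep dep eq deq dsp dsq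
      phip phiq mh Kp Kq"
    and "0 \<le> t" and Lp: "\<And>x. lp * (x \<bullet> x) \<le> x \<bullet> (Lp *v x)" and "k * m \<le> 2 * lp"
    and "0 < k" and ap: "\<forall>i<2. k \<le> ap i" and "k \<le> am"
  shows "\<exists>D. (position_energy m Kps (slide Phip ep dep) mh Kp has_real_derivative D) (at t within {0..})
    \<and> D \<le> - k * position_energy m Kps (slide Phip ep dep) mh Kp t
          + ((\<Sum>i<2. ap i / 2 * (Kps i)\<^sup>2) + am / 2 * m\<^sup>2)"
proof -
  define s where "s = slide Phip ep dep"
  define x where "x = xinorm ep dep t"
  have ds: "(s has_vector_derivative dsp t) (at t within {0..})"
    and dyn: "m *\<^sub>R dsp t = tau_p Lp Phip g ep dep Kp mh t + phip t - m *\<^sub>R gvec g"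
    and dK: "\<forall>i<2.
      (Kp i has_real_derivative norm (s t) * x ^ i - ap i * Kp i t) (at t within {0..})"
    and dmh: "(mh has_real_derivative - (s t \<bullet> gvec g) - am * mh t) (at t within {0..})"
    and \<phi>: "norm (phip t) \<le> Kps 0 + Kps 1 * x"
    using cl \<open>0 \<le> t\<close> unfolding closed_loop_def s_def x_def by blast+
  have tau: "tau_p Lp Phip g ep dep Kp mh t
      = - (Lp *v s t) - (\<Sum>i<2. Kp i t * x ^ i) *\<^sub>R sgn (s t) + mh t *\<^sub>R gvec g"
    by (simp add: tau_p_def Let_def s_def x_def numeral_2_eq_2)
  have "norm (phip t) \<le> (\<Sum>i<2. Kps i * x ^ i)"
    using \<phi> by (simp add: numeral_2_eq_2)
  from position_dissipation[OF dyn[unfolded tau] this Lp \<open>k * m \<le> 2 * lp\<close> \<open>0 < k\<close> ap \<open>k \<le> am\<close>]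
    has_real_derivative_position_energy[OF ds dK dmh]
  show ?thesis
    unfolding s_def[symmetric] by (auto simp: position_energy_def)
qed

lemma closed_loop_attitude_energy_decay:
  assumes cl: "closed_loop m ju Kps Kqs Lp Lq ap am aq g jl Phip Phiq J dJ Cq ep dep eq deq dsp dsq
      phip phiq mh Kp Kq"
    and "0 \<le> t" and Lq: "\<And>x. lq * (x \<bullet> x) \<le> x \<bullet> (Lq *v x)" and "k * ju \<le> 2 * lq"
    and "0 < k" and aq: "\<forall>i<3. k \<le> aq i"
  shows "\<exists>D. (attitude_energy Kqs J (slide Phiq eq deq) Kq has_real_derivative D) (at t within {0..})
    \<and> D \<le> - k * attitude_energy Kqs J (slide Phiq eq deq) Kq t + (\<Sum>i<3. aq i / 2 * (Kqs i)\<^sup>2)"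
proof -
  define s where "s = slide Phiq eq deq"
  define x where "x = xinorm eq deq t"
  have ds: "(s has_vector_derivative dsq t) (at t within {0..})"
    and dyn: "J t *v dsq t = tau_q Lq Phiq eq deq Kq t - Cq t *v s t + phiq t"
    and dJ: "(J has_vector_derivative dJ t) (at t within {0..})"
    and Jsym: "transpose (J t) = J t"
    and Jbound: "s t \<bullet> (J t *v s t) \<le> ju * (s t \<bullet> s t)"
    and skew: "s t \<bullet> ((dJ t - 2 *\<^sub>R Cq t) *v s t) = 0"
    and dK: "\<forall>i<3.
      (Kq i has_real_derivative norm (s t) * x ^ i - aq i * Kq i t) (at t within {0..})"
    and \<phi>: "norm (phiq t) \<le> Kqs 0 + Kqs 1 * x + Kqs 2 * x\<^sup>2"
    using cl \<open>0 \<le> t\<close> unfolding closed_loop_def s_def x_def by simp_all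
  have tau: "tau_q Lq Phiq eq deq Kq t = - (Lq *v s t) - (\<Sum>i<3. Kq i t * x ^ i) *\<^sub>R sgn (s t)"
    by (simp add: tau_q_def Let_def s_def x_def numeral_2_eq_2 numeral_3_eq_3 power2_eq_square)
  have "norm (phiq t) \<le> (\<Sum>i<3. Kqs i * x ^ i)"
    using \<phi> by (simp add: numeral_2_eq_2 numeral_3_eq_3 power2_eq_square)
  from attitude_dissipation[OF dyn[unfolded tau] skew this Lq Jbound \<open>k * ju \<le> 2 * lq\<close> \<open>0 < k\<close> aq]
    has_real_derivative_attitude_energy[OF ds dJ Jsym dK]
  show ?thesis
    unfolding s_def[symmetric] by (auto simp: attitude_energy_def)
qed

lemma closed_loop_Vfun_decay:
  assumes cl: "closed_loop m ju Kps Kqs Lp Lq ap am aq g jl Phip Phiq J dJ Cq ep dep eq deq dsp dsq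
      phip phiq mh Kp Kq"
    and "0 \<le> t"
    and Lp: "\<And>x. lp * (x \<bullet> x) \<le> x \<bullet> (Lp *v x)" and Lq: "\<And>x. lq * (x \<bullet> x) \<le> x \<bullet> (Lq *v x)"
    and k: "0 < k" "k * m \<le> 2 * lp" "k * ju \<le> 2 * lq" "\<forall>i<2. k \<le> ap i" "k \<le> am" "\<forall>i<3. k \<le> aq i"
  shows "\<exists>D. (Vfun m Kps Kqs Phip Phiq J ep dep eq deq mh Kp Kq has_real_derivative D) (at t within {0..})
    \<and> D \<le> - k * Vfun m Kps Kqs Phip Phiq J ep dep eq deq mh Kp Kq t
      + ((\<Sum>i<2. ap i / 2 * (Kps i)\<^sup>2) + am / 2 * m\<^sup>2 + (\<Sum>i<3. aq i / 2 * (Kqs i)\<^sup>2))"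
proof -
  obtain Dp where "(position_energy m Kps (slide Phip ep dep) mh Kp has_real_derivative Dp)
      (at t within {0..})"
    and "Dp \<le> - k * position_energy m Kps (slide Phip ep dep) mh Kp t
      + ((\<Sum>i<2. ap i / 2 * (Kps i)\<^sup>2) + am / 2 * m\<^sup>2)"
    using closed_loop_position_energy_decay[OF cl \<open>0 \<le> t\<close> Lp k(2,1,4,5)] by blast
  moreover obtain Dq where "(attitude_energy Kqs J (slide Phiq eq deq) Kq has_real_derivative Dq)
      (at t within {0..})"
    and "Dq \<le> - k * attitude_energy Kqs J (slide Phiq eq deq) Kq t + (\<Sum>i<3. aq i / 2 * (Kqs i)\<^sup>2)"
    using closed_loop_attitude_energy_decay[OF cl \<open>0 \<le> t\<close> Lq k(3,1,6)] by blast
  ultimately show ?thesis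
    unfolding Vfun_eq_energies by (intro exI[of _ "Dp + Dq"] conjI DERIV_add) (auto simp: algebra_simps)
qed

theorem mainTheorem1:
  fixes m ju :: real and Kps Kqs ap aq :: "nat \<Rightarrow> real" and am :: real
    and Lp Lq :: "real^3^3"
  assumes "0 < m" and "0 < ju"
    and "\<forall>i<2. 0 \<le> Kps i" and "\<forall>i<3. 0 \<le> Kqs i"
    and "posdef Lp" and "posdef Lq"
    and "\<forall>i<2. 0 < ap i" and "0 < am" and "\<forall>i<3. 0 < aq i"
  shows "\<exists>B\<ge>0. \<forall>g jl Phip Phiq J dJ Cq ep dep eq deq dsp dsq phip phiq mh Kp Kq.
           closed_loop m ju Kps Kqs Lp Lq ap am aq g jl Phip Phiq J dJ Cq ep dep eq deq dsp dsq
             phip phiq mh Kp Kq \<longrightarrow>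
           (\<forall>t\<ge>0. Vfun m Kps Kqs Phip Phiq J ep dep eq deq mh Kp Kq t
                   \<le> max (Vfun m Kps Kqs Phip Phiq J ep dep eq deq mh Kp Kq 0) B)"
proof -
  obtain lp lq where "0 < lp" and Lp: "\<And>x. lp * (x \<bullet> x) \<le> x \<bullet> (Lp *v x)"
    and "0 < lq" and Lq: "\<And>x. lq * (x \<bullet> x) \<le> x \<bullet> (Lq *v x)"
    using quadratic_form_coercive[of Lp] quadratic_form_coercive[of Lq] \<open>posdef Lp\<close> \<open>posdef Lq\<close>
    unfolding posdef_def by metis
  define k where "k = min (2 * lp / m) (min (2 * lq / ju) (min (ap 0) (min (ap 1)
      (min am (min (aq 0) (min (aq 1) (aq 2)))))))"
  define C where "C = (\<Sum>i<2. ap i / 2 * (Kps i)\<^sup>2) + am / 2 * m\<^sup>2 + (\<Sum>i<3. aq i / 2 * (Kqs i)\<^sup>2)"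
  have "k \<le> 2 * lp / m" "k \<le> 2 * lq / ju" "k \<le> ap 0" "k \<le> ap 1" "k \<le> am"
    "k \<le> aq 0" "k \<le> aq 1" "k \<le> aq 2"
    by (simp_all add: k_def min_le_iff_disj)
  moreover have "0 < k"
    unfolding k_def using assms \<open>0 < lp\<close> \<open>0 < lq\<close> by simp
  ultimately have k: "0 < k" "k * m \<le> 2 * lp" "k * ju \<le> 2 * lq" "\<forall>i<2. k \<le> ap i" "k \<le> am"
    "\<forall>i<3. k \<le> aq i"
    using \<open>0 < m\<close> \<open>0 < ju\<close>
    by (auto simp: pos_le_divide_eq less_2_cases_iff less_Suc_eq numeral_2_eq_2 numeral_3_eq_3)
  have "0 \<le> C"
    unfolding C_def using assms by (intro add_nonneg_nonneg sum_nonneg) (auto simp: less_imp_le)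
  show ?thesis
  proof (intro exI[of _ "C / k"] conjI allI impI)
    show "0 \<le> C / k"
      using \<open>0 \<le> C\<close> \<open>0 < k\<close> by simp
    fix g jl Phip Phiq J dJ Cq ep dep eq deq dsp dsq phip phiq mh Kp Kq and t :: real
    assume "closed_loop m ju Kps Kqs Lp Lq ap am aq g jl Phip Phiq J dJ Cq ep dep eq deq dsp dsq
      phip phiq mh Kp Kq" and "0 \<le> t"
    with closed_loop_Vfun_decay[OF _ _ Lp Lq k]
    show "Vfun m Kps Kqs Phip Phiq J ep dep eq deq mh Kp Kq t
        \<le> max (Vfun m Kps Kqs Phip Phiq J ep dep eq deq mh Kp Kq 0) (C / k)"
      unfolding C_def by (intro decay_comparison[OF \<open>0 < k\<close>]) auto
  qed
qed

end
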